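(* Assume $|B|<|B|_c$ and $\xi\in\mathbb{R}$ with $|\xi|>|\xi|^B_{vc}$, and let $\mathcal S=\{s>0:\alpha(s)<0\}$. Then there exists a unique $s\in\mathcal S$ such that, with $\lambda(|\xi|,s):=\sqrt{-\alpha(s)}>0$, one has $s=\lambda(|\xi|,s)$.
   Context: $g>0$, $\rho_+>\rho_->0$, $[\rho]=\rho_+-\rho_-$, $\mu_\pm>0$, $B\ne0$; $\rho,\mu$ equal $\rho_+,\mu_+$ on $(0,1)$ and $\rho_-,\mu_-$ on $(-1,0)$. For $s>0$ and $\psi\in H_0^2((-1,1))$: $E_s(\psi)=\frac12\int_{-1}^1\big[s\mu(4\xi^2|\psi'|^2+|\xi^2\psi+\psi''|^2)+|B|^2(\xi^2|\psi'|^2+|\psi''|^2)\big]dx_2-\frac12\xi^2g[\rho]\psi(0)^2$, $J(\psi)=\frac12\int_{-1}^1\rho(\xi^2|\psi|^2+|\psi'|^2)dx_2$, $\alpha(s)=\inf\{E_s(\psi):\psi\in H_0^2((-1,1)),J(\psi)=1\}$. $|B|_c^2:=\sup\{g[\rho]\psi(0)^2/\int_{-1}^1|\psi'|^2: 0\ne\psi\in H_0^1((-1,1))\}$; $(|\xi|^B_{vc})^2:=\inf\{|B|^2\int|\psi''|^2/(g[\rho]\psi(0)^2-|B|^2\int|\psi'|^2):\psi\in H_0^2((-1,1)),\ g[\rho]\psi(0)^2-|B|^2\int|\psi'|^2>0\}$. *)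

theory Defs
  imports "HOL-Analysis.Analysis"
begin

text \<open>One-dimensional Sobolev spaces on (-1,1), via absolutely continuous
representatives.\<close>

definition H01 :: "(real \<Rightarrow> real) \<Rightarrow> (real \<Rightarrow> real) \<Rightarrow> bool" where
  "H01 psi d1 \<longleftrightarrow>
     set_borel_measurable lborel {-1..1} d1 \<and>
     set_integrable lborel {-1..1} (\<lambda>x. (d1 x)\<^sup>2) \<and>
     (\<forall>x\<in>{-1..1}. psi x = (LBINT t:{-1..x}. d1 t)) \<and> psi 1 = 0"

definition H02 :: "(real \<Rightarrow> real) \<Rightarrow> (real \<Rightarrow> real) \<Rightarrow> (real \<Rightarrow> real) \<Rightarrow> bool" where
  "H02 psi d1 d2 \<longleftrightarrow> H01 d1 d2 \<and> H01 psi d1"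

definition pwc :: "real \<Rightarrow> real \<Rightarrow> real \<Rightarrow> real" where
  "pwc vp vm x = (if x > 0 then vp else vm)"

text \<open>Energy E_s; b stands for |B|.\<close>
definition Es :: "real \<Rightarrow> real \<Rightarrow> real \<Rightarrow> real \<Rightarrow> real \<Rightarrow> real \<Rightarrow> real \<Rightarrow> real
    \<Rightarrow> (real \<Rightarrow> real) \<Rightarrow> (real \<Rightarrow> real) \<Rightarrow> (real \<Rightarrow> real) \<Rightarrow> real" where
  "Es g rp rm mp mm b xi s psi d1 d2 =
     1/2 * (LBINT x:{-1..1}.
        s * pwc mp mm x * (4 * xi\<^sup>2 * (d1 x)\<^sup>2 + (xi\<^sup>2 * psi x + d2 x)\<^sup>2)
        + b\<^sup>2 * (xi\<^sup>2 * (d1 x)\<^sup>2 + (d2 x)\<^sup>2))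
     - 1/2 * xi\<^sup>2 * g * (rp - rm) * (psi 0)\<^sup>2"

definition Jf :: "real \<Rightarrow> real \<Rightarrow> real \<Rightarrow> (real \<Rightarrow> real) \<Rightarrow> (real \<Rightarrow> real) \<Rightarrow> real" where
  "Jf rp rm xi psi d1 =
     1/2 * (LBINT x:{-1..1}. pwc rp rm x * (xi\<^sup>2 * (psi x)\<^sup>2 + (d1 x)\<^sup>2))"

definition alpha :: "real \<Rightarrow> real \<Rightarrow> real \<Rightarrow> real \<Rightarrow> real \<Rightarrow> real \<Rightarrow> real \<Rightarrow> real \<Rightarrow> real" where
  "alpha g rp rm mp mm b xi s =
     Inf {Es g rp rm mp mm b xi s psi d1 d2 | psi d1 d2.
            H02 psi d1 d2 \<and> Jf rp rm xi psi d1 = 1}"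

definition Bc2 :: "real \<Rightarrow> real \<Rightarrow> real \<Rightarrow> real" where
  "Bc2 g rp rm =
     Sup {g * (rp - rm) * (psi 0)\<^sup>2 / (LBINT x:{-1..1}. (d1 x)\<^sup>2) | psi d1.
            H01 psi d1 \<and> (\<exists>x\<in>{-1<..<1}. psi x \<noteq> 0)}"

definition xivc2 :: "real \<Rightarrow> real \<Rightarrow> real \<Rightarrow> real \<Rightarrow> real" where
  "xivc2 g rp rm b =
     Inf {b\<^sup>2 * (LBINT x:{-1..1}. (d2 x)\<^sup>2) /
            (g * (rp - rm) * (psi 0)\<^sup>2 - b\<^sup>2 * (LBINT x:{-1..1}. (d1 x)\<^sup>2)) | psi d1 d2.
            H02 psi d1 d2 \<and>
            g * (rp - rm) * (psi 0)\<^sup>2 - b\<^sup>2 * (LBINT x:{-1..1}. (d1 x)\<^sup>2) > 0}"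

end

theory Submission
  imports Defs "HOL-Real_Asymp.Real_Asymp"
begin

text \<open>The energy is affine in the viscosity parameter, \<open>E\<^sub>s = s D + E\<^sub>0\<close> with \<open>D \<ge> 0\<close>, so
  \<open>\<alpha>\<close> is the lower envelope of a family of nondecreasing affine functions of \<open>s\<close>: it is
  nondecreasing, concave (hence continuous on \<open>s > 0\<close>) and bounded below, because
  \<open>\<psi>(0)\<^sup>2 \<le> \<integral>\<psi>'\<^sup>2 / 2 \<le> J(\<psi>) / \<rho>\<^sub>-\<close>. The solutions of \<open>s = \<surd>(-\<alpha>(s))\<close> are the zeros of the strictly
  increasing function \<open>s\<^sup>2 + \<alpha>(s)\<close>, which is positive for large \<open>s\<close> and negative for small \<open>s\<close> as soon
  as some admissible \<open>\<psi>\<close> has \<open>E\<^sub>0(\<psi>) < 0\<close>. Such a \<open>\<psi>\<close> is what \<open>|\<xi>| > |\<xi>|\<^sup>B\<^sub>v\<^sub>c\<close> provides, provided the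
  infimum defining \<open>|\<xi>|\<^sup>B\<^sub>v\<^sub>c\<close> ranges over a nonempty set; this follows from \<open>|B| < |B|\<^sub>c\<close>, since
  \<open>|B|\<^sub>c\<^sup>2 \<le> g[\<rho>]/2\<close> while smoothed tents make \<open>2\<psi>(0)\<^sup>2 / \<integral>\<psi>'\<^sup>2\<close> arbitrarily close to 1.\<close>

lemma square_integral_le_integral_square:
  fixes f :: "real \<Rightarrow> real"
  assumes f: "f integrable_on {a..b}" and f2: "(\<lambda>x. (f x)\<^sup>2) integrable_on {a..b}"
    and "a \<le> b"
  shows "(integral {a..b} f)\<^sup>2 \<le> (b - a) * integral {a..b} (\<lambda>x. (f x)\<^sup>2)"
proof (cases "a = b")
  case False
  then have len: "0 < b - a" using \<open>a \<le> b\<close> by simp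
  define I where "I = integral {a..b} f"
  define Q where "Q = integral {a..b} (\<lambda>x. (f x)\<^sup>2)"
  define c where "c = I / (b - a)"
  have sq: "(\<lambda>x. (f x)\<^sup>2 - 2 * c * f x + c\<^sup>2) = (\<lambda>x. (f x - c)\<^sup>2)"
    by (simp add: fun_eq_iff power2_eq_square algebra_simps)
  have "((\<lambda>x. (f x)\<^sup>2 - 2 * c * f x + c\<^sup>2) has_integral Q - 2 * c * I + c\<^sup>2 * (b - a)) {a..b}"
  proof (intro has_integral_add has_integral_diff)
    show "((\<lambda>x. (f x)\<^sup>2) has_integral Q) {a..b}" using f2 by (simp add: Q_def has_integral_integral)
    show "((\<lambda>x. 2 * c * f x) has_integral 2 * c * I) {a..b}"
      unfolding I_def by (intro has_integral_mult_right integrable_integral f)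
    show "((\<lambda>x. c\<^sup>2) has_integral c\<^sup>2 * (b - a)) {a..b}"
      using has_integral_const_real[of "c\<^sup>2" a b] \<open>a \<le> b\<close> by (simp add: mult.commute)
  qed
  then have "0 \<le> Q - 2 * c * I + c\<^sup>2 * (b - a)"
    unfolding sq by (rule has_integral_nonneg) simp
  also have "\<dots> = Q - I\<^sup>2 / (b - a)"
    using len unfolding c_def by (simp add: power2_eq_square divide_simps del: diff_gt_0_iff_gt)
  finally have "I\<^sup>2 / (b - a) \<le> Q" by simp
  then show ?thesis using len by (simp add: I_def Q_def pos_divide_le_eq mult.commute)
qed simp

lemma set_borel_measurable_iff_restrict_space:
  fixes f :: "'a \<Rightarrow> 'b::real_normed_vector"
  assumes "S \<in> sets M"
  shows "set_borel_measurable M S f \<longleftrightarrow> f \<in> borel_measurable (restrict_space M S)"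
  unfolding set_borel_measurable_def
  by (subst borel_measurable_restrict_space_iff) (use assms in auto)

lemma continuous_on_Icc_borel_measurable:
  fixes f :: "real \<Rightarrow> real"
  assumes "continuous_on {a..b} f"
  shows "f \<in> borel_measurable (restrict_space lborel {a..b})"
proof -
  have "(\<lambda>x. indicator {a..b} x *\<^sub>R f x) \<in> borel_measurable borel"
    by (rule borel_measurable_continuous_on_indicator) (use assms in auto)
  then show ?thesis
    by (simp flip: set_borel_measurable_iff_restrict_space add: set_borel_measurable_def)
qed

lemma continuous_on_Icc_set_integrable:
  fixes f :: "real \<Rightarrow> real"
  shows "continuous_on {a..b} f \<Longrightarrow> set_integrable lborel {a..b} f"
  unfolding set_integrable_def by (rule borel_integrable_compact) auto

lemma H01_measurable: "H01 psi d1 \<Longrightarrow> d1 \<in> borel_measurable (restrict_space lborel {-1..1})"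
  by (simp add: H01_def flip: set_borel_measurable_iff_restrict_space)

lemma H01_square_integrable: "H01 psi d1 \<Longrightarrow> set_integrable lborel {-1..1} (\<lambda>x. (d1 x)\<^sup>2)"
  by (simp add: H01_def)

lemma H01_integrable:
  assumes "H01 psi d1"
  shows "set_integrable lborel {-1..1} d1"
proof (rule set_integrable_bound)
  show "set_integrable lborel {-1..1} (\<lambda>x. 1 + (d1 x)\<^sup>2)"
    using set_integral_add(1)[OF continuous_on_Icc_set_integrable[OF continuous_on_const]
        H01_square_integrable[OF assms]] by simp
  show "set_borel_measurable lborel {-1..1} d1" using assms by (simp add: H01_def)
  have "\<bar>d\<bar> \<le> 1 + d\<^sup>2" for d :: real
  proof (cases "\<bar>d\<bar> \<le> 1")
    case False
    then have "\<bar>d\<bar> * 1 \<le> \<bar>d\<bar> * \<bar>d\<bar>" by (intro mult_left_mono) auto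
    then show ?thesis by (simp add: power2_eq_square abs_mult[symmetric])
  qed (simp add: add_increasing2)
  then show "AE x in lborel. x \<in> {-1..1} \<longrightarrow> norm (d1 x) \<le> norm (1 + (d1 x)\<^sup>2)"
    by auto
qed

lemma H01_integrable_on:
  assumes "H01 psi d1" "{a..b} \<subseteq> {-1..1}"
  shows "d1 integrable_on {a..b}" "(\<lambda>x. (d1 x)\<^sup>2) integrable_on {a..b}"
  using integrable_on_subinterval[OF set_borel_integral_eq_integral(1), OF _ assms(2)]
    H01_integrable[OF assms(1)] H01_square_integrable[OF assms(1)] by auto

lemma H01_eq_integral:
  assumes "H01 psi d1" "x \<in> {-1..1}"
  shows "psi x = integral {-1..x} d1"
proof -
  have "set_integrable lborel {-1..x} d1"
    by (rule set_integrable_subset[OF H01_integrable[OF assms(1)]]) (use assms(2) in auto)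
  then show ?thesis
    using assms set_borel_integral_eq_integral(2) unfolding H01_def by metis
qed

lemma H01_continuous_on:
  assumes "H01 psi d1"
  shows "continuous_on {-1..1} psi"
  using indefinite_integral_continuous_1[OF H01_integrable_on(1)[OF assms order_refl]]
  by (rule continuous_on_eq) (simp add: H01_eq_integral[OF assms])

lemma H01_square_integral_eq:
  "H01 psi d1 \<Longrightarrow> (LBINT x:{-1..1}. (d1 x)\<^sup>2) = integral {-1..1} (\<lambda>x. (d1 x)\<^sup>2)"
  using set_borel_integral_eq_integral(2) H01_square_integrable by blast

lemma H01_square_at_0_le:
  assumes "H01 psi d1"
  shows "2 * (psi 0)\<^sup>2 \<le> (LBINT x:{-1..1}. (d1 x)\<^sup>2)"
proof -
  have combine: "integral {-1..0} h + integral {0..1} h = integral {-1..1} h"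
    if "h integrable_on {-1..1}" for h :: "real \<Rightarrow> real"
    by (rule Henstock_Kurzweil_Integration.integral_combine) (use that in auto)
  have left: "psi 0 = integral {-1..0} d1" using H01_eq_integral[OF assms, of 0] by simp
  have "integral {-1..1} d1 = 0"
    using H01_eq_integral[OF assms, of 1] assms by (simp add: H01_def)
  then have right: "psi 0 = - integral {0..1} d1"
    using left combine[OF H01_integrable_on(1)[OF assms order_refl]] by simp
  have "(psi 0)\<^sup>2 \<le> integral {-1..0} (\<lambda>x. (d1 x)\<^sup>2)"
    unfolding left by (rule order_trans[OF square_integral_le_integral_square])
      (use H01_integrable_on[OF assms, of "-1" 0] in auto)
  moreover have "(psi 0)\<^sup>2 \<le> integral {0..1} (\<lambda>x. (d1 x)\<^sup>2)"
    unfolding right power2_minus by (rule order_trans[OF square_integral_le_integral_square])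
      (use H01_integrable_on[OF assms, of 0 1] in auto)
  ultimately show ?thesis
    using combine[OF H01_integrable_on(2)[OF assms order_refl]] H01_square_integral_eq[OF assms] by linarith
qed

lemma pwc_borel_measurable: "pwc a b \<in> borel_measurable borel"
  unfolding pwc_def by measurable

lemma pwc_nonneg: "0 \<le> a \<Longrightarrow> 0 \<le> b \<Longrightarrow> 0 \<le> pwc a b x"
  by (simp add: pwc_def)

lemma pwc_ge_lower: "b \<le> a \<Longrightarrow> b \<le> pwc a b x"
  by (simp add: pwc_def)

lemma set_integrable_pwc_mult:
  fixes f :: "real \<Rightarrow> real"
  assumes "set_integrable lborel {-1..1} f"
    and [measurable]: "f \<in> borel_measurable (restrict_space lborel {-1..1})"
  shows "set_integrable lborel {-1..1} (\<lambda>x. pwc a b x * f x)"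
proof (rule set_integrable_bound)
  show "set_integrable lborel {-1..1} (\<lambda>x. (\<bar>a\<bar> + \<bar>b\<bar>) * \<bar>f x\<bar>)"
    using set_integrable_abs[OF assms(1)] by (rule set_integrable_mult_right)
  have [measurable]: "pwc a b \<in> borel_measurable (restrict_space lborel {-1..1})"
    using pwc_borel_measurable by (simp add: measurable_restrict_space1)
  show "set_borel_measurable lborel {-1..1} (\<lambda>x. pwc a b x * f x)"
    by (subst set_borel_measurable_iff_restrict_space) simp_all
  have "\<bar>pwc a b x\<bar> \<le> \<bar>a\<bar> + \<bar>b\<bar>" for x
    by (simp add: pwc_def)
  then show "AE x in lborel. x \<in> {-1..1} \<longrightarrow> norm (pwc a b x * f x) \<le> norm ((\<bar>a\<bar> + \<bar>b\<bar>) * \<bar>f x\<bar>)"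
    by (auto simp: abs_mult intro!: mult_right_mono)
qed

lemma H01_psi_measurable: "H01 psi d1 \<Longrightarrow> psi \<in> borel_measurable (restrict_space lborel {-1..1})"
  by (rule continuous_on_Icc_borel_measurable[OF H01_continuous_on])

lemma H01_psi_square_integrable: "H01 psi d1 \<Longrightarrow> set_integrable lborel {-1..1} (\<lambda>x. (psi x)\<^sup>2)"
  by (intro continuous_on_Icc_set_integrable continuous_intros H01_continuous_on)

lemma H01_Jf_density_integrable:
  assumes "H01 psi d1"
  shows "set_integrable lborel {-1..1} (\<lambda>x. pwc a b x * (xi\<^sup>2 * (psi x)\<^sup>2 + (d1 x)\<^sup>2))"
proof (rule set_integrable_pwc_mult)
  show "set_integrable lborel {-1..1} (\<lambda>x. xi\<^sup>2 * (psi x)\<^sup>2 + (d1 x)\<^sup>2)"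
    using H01_psi_square_integrable[OF assms] H01_square_integrable[OF assms] by simp
  show "(\<lambda>x. xi\<^sup>2 * (psi x)\<^sup>2 + (d1 x)\<^sup>2) \<in> borel_measurable (restrict_space lborel {-1..1})"
    using H01_psi_measurable[OF assms] H01_measurable[OF assms] by measurable
qed

lemma H02_dissipation_density_integrable:
  assumes "H02 psi d1 d2"
  shows "set_integrable lborel {-1..1}
           (\<lambda>x. pwc a b x * (4 * xi\<^sup>2 * (d1 x)\<^sup>2 + (xi\<^sup>2 * psi x + d2 x)\<^sup>2))"
proof -
  have h1: "H01 psi d1" and h2: "H01 d1 d2" using assms by (auto simp: H02_def)
  note [measurable] = H01_psi_measurable[OF h1] H01_measurable[OF h1] H01_measurable[OF h2]
  have "set_integrable lborel {-1..1} (\<lambda>x. 4 * xi\<^sup>2 * (d1 x)\<^sup>2 + 2 * (xi\<^sup>2)\<^sup>2 * (psi x)\<^sup>2 + 2 * (d2 x)\<^sup>2)"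
    using H01_psi_square_integrable[OF h1] H01_square_integrable[OF h1] H01_square_integrable[OF h2]
    by simp
  then have "set_integrable lborel {-1..1} (\<lambda>x. 4 * xi\<^sup>2 * (d1 x)\<^sup>2 + (xi\<^sup>2 * psi x + d2 x)\<^sup>2)"
  proof (rule set_integrable_bound)
    show "set_borel_measurable lborel {-1..1} (\<lambda>x. 4 * xi\<^sup>2 * (d1 x)\<^sup>2 + (xi\<^sup>2 * psi x + d2 x)\<^sup>2)"
      by (subst set_borel_measurable_iff_restrict_space) simp_all
    have "(xi\<^sup>2 * psi x + d2 x)\<^sup>2 \<le> 2 * (xi\<^sup>2)\<^sup>2 * (psi x)\<^sup>2 + 2 * (d2 x)\<^sup>2" for x
      using zero_le_power2[of "xi\<^sup>2 * psi x - d2 x"] by (simp add: power2_eq_square algebra_simps)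
    then show "AE x in lborel. x \<in> {-1..1} \<longrightarrow> norm (4 * xi\<^sup>2 * (d1 x)\<^sup>2 + (xi\<^sup>2 * psi x + d2 x)\<^sup>2)
        \<le> norm (4 * xi\<^sup>2 * (d1 x)\<^sup>2 + 2 * (xi\<^sup>2)\<^sup>2 * (psi x)\<^sup>2 + 2 * (d2 x)\<^sup>2)"
      by (intro AE_I2) (simp add: add.assoc)
  qed
  then show ?thesis by (rule set_integrable_pwc_mult) simp
qed

lemma set_integral_nonneg:
  fixes f :: "'a \<Rightarrow> real"
  assumes "\<And>x. x \<in> A \<Longrightarrow> 0 \<le> f x"
  shows "0 \<le> (LINT x:A|M. f x)"
  unfolding set_lebesgue_integral_def
  by (rule integral_nonneg_AE) (auto simp: assms indicator_def)

definition dissipation ::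
    "real \<Rightarrow> real \<Rightarrow> real \<Rightarrow> (real \<Rightarrow> real) \<Rightarrow> (real \<Rightarrow> real) \<Rightarrow> (real \<Rightarrow> real) \<Rightarrow> real"
  where "dissipation mp mm xi psi d1 d2 =
    1/2 * (LBINT x:{-1..1}. pwc mp mm x * (4 * xi\<^sup>2 * (d1 x)\<^sup>2 + (xi\<^sup>2 * psi x + d2 x)\<^sup>2))"

definition E0 :: "real \<Rightarrow> real \<Rightarrow> real \<Rightarrow> real \<Rightarrow> real
    \<Rightarrow> (real \<Rightarrow> real) \<Rightarrow> (real \<Rightarrow> real) \<Rightarrow> (real \<Rightarrow> real) \<Rightarrow> real"
  where "E0 g rp rm b xi psi d1 d2 =
    1/2 * b\<^sup>2 * (xi\<^sup>2 * (LBINT x:{-1..1}. (d1 x)\<^sup>2) + (LBINT x:{-1..1}. (d2 x)\<^sup>2))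
    - 1/2 * xi\<^sup>2 * g * (rp - rm) * (psi 0)\<^sup>2"

lemma Es_eq_affine:
  assumes "H02 psi d1 d2"
  shows "Es g rp rm mp mm b xi s psi d1 d2
    = s * dissipation mp mm xi psi d1 d2 + E0 g rp rm b xi psi d1 d2"
proof -
  have h1: "H01 psi d1" and h2: "H01 d1 d2" using assms by (auto simp: H02_def)
  note d1_int = H01_square_integrable[OF h1] and d2_int = H01_square_integrable[OF h2]
  have "(LBINT x:{-1..1}. s * pwc mp mm x * (4 * xi\<^sup>2 * (d1 x)\<^sup>2 + (xi\<^sup>2 * psi x + d2 x)\<^sup>2)
        + b\<^sup>2 * (xi\<^sup>2 * (d1 x)\<^sup>2 + (d2 x)\<^sup>2))
      = s * (LBINT x:{-1..1}. pwc mp mm x * (4 * xi\<^sup>2 * (d1 x)\<^sup>2 + (xi\<^sup>2 * psi x + d2 x)\<^sup>2))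
        + b\<^sup>2 * (xi\<^sup>2 * (LBINT x:{-1..1}. (d1 x)\<^sup>2) + (LBINT x:{-1..1}. (d2 x)\<^sup>2))"
    using H02_dissipation_density_integrable[OF assms, of mp mm xi] d1_int d2_int
    by (simp add: mult.assoc set_integral_add)
  then show ?thesis
    unfolding Es_def dissipation_def E0_def by (simp add: algebra_simps)
qed

lemma dissipation_nonneg: "0 \<le> mp \<Longrightarrow> 0 \<le> mm \<Longrightarrow> 0 \<le> dissipation mp mm xi psi d1 d2"
  unfolding dissipation_def by (auto intro!: set_integral_nonneg mult_nonneg_nonneg pwc_nonneg)

lemma H01_scale:
  assumes "H01 psi d1"
  shows "H01 (\<lambda>x. c * psi x) (\<lambda>x. c * d1 x)"
proof -
  note [measurable] = H01_measurable[OF assms]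
  have "set_borel_measurable lborel {-1..1} (\<lambda>x. c * d1 x)"
    by (subst set_borel_measurable_iff_restrict_space) simp_all
  moreover have "set_integrable lborel {-1..1} (\<lambda>x. (c * d1 x)\<^sup>2)"
    using H01_square_integrable[OF assms] by (simp add: power_mult_distrib)
  ultimately show ?thesis
    using assms by (simp add: H01_def)
qed

lemma H02_scale: "H02 psi d1 d2 \<Longrightarrow> H02 (\<lambda>x. c * psi x) (\<lambda>x. c * d1 x) (\<lambda>x. c * d2 x)"
  unfolding H02_def using H01_scale by blast

lemma Jf_scale: "Jf rp rm xi (\<lambda>x. c * psi x) (\<lambda>x. c * d1 x) = c\<^sup>2 * Jf rp rm xi psi d1"
proof -
  have "(\<lambda>x. pwc rp rm x * (xi\<^sup>2 * (c * psi x)\<^sup>2 + (c * d1 x)\<^sup>2))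
      = (\<lambda>x. c\<^sup>2 * (pwc rp rm x * (xi\<^sup>2 * (psi x)\<^sup>2 + (d1 x)\<^sup>2)))"
    by (simp add: fun_eq_iff power2_eq_square algebra_simps)
  then show ?thesis unfolding Jf_def by simp
qed

lemma E0_scale:
  "E0 g rp rm b xi (\<lambda>x. c * psi x) (\<lambda>x. c * d1 x) (\<lambda>x. c * d2 x) = c\<^sup>2 * E0 g rp rm b xi psi d1 d2"
  unfolding E0_def by (simp add: power_mult_distrib algebra_simps)

lemma H01_square_at_0_le_Jf:
  assumes "H01 psi d1" "0 \<le> rm" "rm \<le> rp"
  shows "rm * (psi 0)\<^sup>2 \<le> Jf rp rm xi psi d1"
proof -
  have "(LBINT x:{-1..1}. rm * (d1 x)\<^sup>2) \<le> (LBINT x:{-1..1}. pwc rp rm x * (xi\<^sup>2 * (psi x)\<^sup>2 + (d1 x)\<^sup>2))"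
  proof (rule set_integral_mono)
    show "set_integrable lborel {-1..1} (\<lambda>x. rm * (d1 x)\<^sup>2)"
      using H01_square_integrable[OF assms(1)] by simp
    show "set_integrable lborel {-1..1} (\<lambda>x. pwc rp rm x * (xi\<^sup>2 * (psi x)\<^sup>2 + (d1 x)\<^sup>2))"
      by (rule H01_Jf_density_integrable[OF assms(1)])
    fix x
    have "rm * (d1 x)\<^sup>2 \<le> pwc rp rm x * (d1 x)\<^sup>2"
      using pwc_ge_lower[OF assms(3)] by (rule mult_right_mono) simp
    also have "\<dots> \<le> pwc rp rm x * (xi\<^sup>2 * (psi x)\<^sup>2 + (d1 x)\<^sup>2)"
      using assms by (intro mult_left_mono pwc_nonneg) auto
    finally show "rm * (d1 x)\<^sup>2 \<le> pwc rp rm x * (xi\<^sup>2 * (psi x)\<^sup>2 + (d1 x)\<^sup>2)" .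
  qed
  then have "rm * (LBINT x:{-1..1}. (d1 x)\<^sup>2) \<le> 2 * Jf rp rm xi psi d1"
    by (simp add: Jf_def)
  moreover have "rm * (2 * (psi 0)\<^sup>2) \<le> rm * (LBINT x:{-1..1}. (d1 x)\<^sup>2)"
    using H01_square_at_0_le[OF assms(1)] assms(2) by (rule mult_left_mono)
  ultimately show ?thesis by simp
qed

lemma Jf_pos:
  assumes "H01 psi d1" "0 < rm" "rm \<le> rp" "psi 0 \<noteq> 0"
  shows "0 < Jf rp rm xi psi d1"
proof -
  have "0 < rm * (psi 0)\<^sup>2" using assms(2,4) by simp
  also have "\<dots> \<le> Jf rp rm xi psi d1"
    using assms(1-3) by (intro H01_square_at_0_le_Jf) auto
  finally show ?thesis .
qed

lemma E0_lower_bound: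
  assumes "H01 psi d1" "0 \<le> g" "0 < rm" "rm \<le> rp"
  shows "- (xi\<^sup>2 * g * (rp - rm) * Jf rp rm xi psi d1 / (2 * rm)) \<le> E0 g rp rm b xi psi d1 d2"
proof -
  have "0 \<le> 1/2 * b\<^sup>2 * (xi\<^sup>2 * (LBINT x:{-1..1}. (d1 x)\<^sup>2) + (LBINT x:{-1..1}. (d2 x)\<^sup>2))"
    by (intro mult_nonneg_nonneg add_nonneg_nonneg set_integral_nonneg) auto
  moreover have "(psi 0)\<^sup>2 \<le> Jf rp rm xi psi d1 / rm"
    using H01_square_at_0_le_Jf[OF assms(1) _ assms(4), of xi] assms(3)
    by (simp add: pos_le_divide_eq mult.commute)
  then have "xi\<^sup>2 * g * (rp - rm) * (psi 0)\<^sup>2 \<le> xi\<^sup>2 * g * (rp - rm) * (Jf rp rm xi psi d1 / rm)"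
    using assms by (intro mult_left_mono) auto
  ultimately show ?thesis unfolding E0_def by simp
qed

lemma H01_glue_at_0:
  fixes P Q P' Q' :: "real \<Rightarrow> real"
  assumes "continuous_on UNIV P'" "continuous_on UNIV Q'"
    and "P 0 = Q 0" "P' 0 = Q' 0"
    and P: "\<And>x. (P has_real_derivative P' x) (at x)"
    and Q: "\<And>x. (Q has_real_derivative Q' x) (at x)"
    and "P (-1) = 0" "Q 1 = 0"
  shows "H01 (\<lambda>x. if x \<le> 0 then P x else Q x) (\<lambda>x. if x \<le> 0 then P' x else Q' x)"
proof -
  define F where "F x = (if x \<le> 0 then P x else Q x)" for x
  define f where "f x = (if x \<le> 0 then P' x else Q' x)" for x
  have glue: "continuous_on UNIV (\<lambda>x. if x \<le> 0 then u x else v x)"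
    if "continuous_on UNIV u" "continuous_on UNIV v" "u 0 = v 0" for u v :: "real \<Rightarrow> real"
    using continuous_on_cases_le[of UNIV id 0 u v] that
    by (auto intro: continuous_on_subset continuous_on_id)
  have "continuous_on UNIV P" "continuous_on UNIV Q"
    using P Q by (auto intro!: DERIV_isCont continuous_at_imp_continuous_on)
  then have cF: "continuous_on UNIV F" unfolding F_def using assms(3) by (rule glue)
  have cf: "continuous_on UNIV f" unfolding f_def using assms(1,2,4) by (rule glue)
  have dF: "(F has_vector_derivative f x) (at x)" if "x \<noteq> 0" for x
  proof (cases "x < 0")
    case True
    have "(F has_real_derivative P' x) (at x)"
      by (rule has_field_derivative_transform_within_open[OF P, of "{..<0}"])
        (use True in \<open>auto simp: F_def\<close>)
    then show ?thesis using True by (simp add: has_real_derivative_iff_has_vector_derivative f_def)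
  next
    case False
    then have "x > 0" using that by simp
    have "(F has_real_derivative Q' x) (at x)"
      by (rule has_field_derivative_transform_within_open[OF Q, of "{0<..}"])
        (use \<open>x > 0\<close> in \<open>auto simp: F_def\<close>)
    then show ?thesis using \<open>x > 0\<close> by (simp add: has_real_derivative_iff_has_vector_derivative f_def)
  qed
  have "F x = (LBINT t:{-1..x}. f t)" if "x \<in> {-1..1}" for x
  proof -
    have "(f has_integral F x - F (-1)) {-1..x}"
      by (rule fundamental_theorem_of_calculus_interior_strong[of "{0}"])
        (use that dF in \<open>auto intro: continuous_on_subset[OF cF]\<close>)
    moreover have "F (-1) = 0" using assms(7) by (simp add: F_def)
    ultimately have "integral {-1..x} f = F x" by (simp add: integral_unique)
    moreover have "set_integrable lborel {-1..x} f"
      by (rule continuous_on_Icc_set_integrable) (rule continuous_on_subset[OF cf], simp)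
    ultimately show ?thesis
      by (simp add: set_borel_integral_eq_integral(2))
  qed
  moreover have "set_borel_measurable lborel {-1..1} f"
    by (simp add: set_borel_measurable_iff_restrict_space continuous_on_Icc_borel_measurable
        continuous_on_subset[OF cf])
  moreover have "set_integrable lborel {-1..1} (\<lambda>x. (f x)\<^sup>2)"
    by (intro continuous_on_Icc_set_integrable continuous_intros continuous_on_subset[OF cf]) simp
  ultimately show ?thesis
    using assms(8) unfolding H01_def F_def[symmetric] f_def[symmetric] by (simp add: F_def)
qed

lemma square_one_minus_powers_le_1:
  fixes u v :: real
  assumes "0 \<le> u" "0 \<le> v" "u + v = 1"
  shows "(1 - u^Suc n - v^Suc n)\<^sup>2 \<le> 1"
proof -
  have "u^Suc n \<le> u" "v^Suc n \<le> v"
    using assms by (auto intro!: power_le_one mult_left_le simp del: power_Suc simp: power_Suc)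
  moreover have "0 \<le> u^Suc n" "0 \<le> v^Suc n" using assms by simp_all
  ultimately have "\<bar>1 - u^Suc n - v^Suc n\<bar> \<le> 1" using assms by linarith
  then show ?thesis
    using abs_le_square_iff[of "1 - u^Suc n - v^Suc n" 1] by (simp del: power_Suc)
qed

text \<open>The constant in \<open>H01_square_at_0_le\<close> is sharp but attained only by the tent
  \<open>1 - \<bar>x\<bar>\<close>, which is not in \<open>H\<^sup>2\<^sub>0\<close>; these smoothed tents (scaled by \<open>n + 2\<close>) approach it.\<close>
lemma H02_smoothed_tent:
  fixes n :: nat
  shows "\<exists>psi d1 d2. H02 psi d1 d2 \<and> psi 0 = real n \<and> (LBINT x:{-1..1}. (d1 x)\<^sup>2) \<le> 2 * (real n + 2)\<^sup>2"
proof -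
  define c where "c = real n + 2"
  define psi where "psi x = (if x \<le> 0 then c * (1 + x) - (1 + x)^Suc (Suc n) - 1 + (-x)^Suc (Suc n)
    else c * (1 - x) - (1 - x)^Suc (Suc n) - 1 + x^Suc (Suc n))" for x :: real
  define d1 where "d1 x = (if x \<le> 0 then c * (1 - (1 + x)^Suc n - (-x)^Suc n)
    else - (c * (1 - (1 - x)^Suc n - x^Suc n)))" for x :: real
  define d2 where "d2 x = (if x \<le> 0 then c * (n + 1) * ((-x)^n - (1 + x)^n)
    else c * (n + 1) * (x^n - (1 - x)^n))" for x :: real
  have "H01 psi d1" unfolding psi_def d1_def
    by (rule H01_glue_at_0) (auto intro!: derivative_eq_intros continuous_intros
        simp del: power_Suc simp: algebra_simps c_def)
  moreover have "H01 d1 d2" unfolding d1_def d2_def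
    by (rule H01_glue_at_0) (auto intro!: derivative_eq_intros continuous_intros
        simp del: power_Suc simp: algebra_simps c_def)
  moreover have "psi 0 = n" by (simp add: psi_def c_def)
  moreover have "(LBINT x:{-1..1}. (d1 x)\<^sup>2) \<le> (LBINT x:{-1..1::real}. c\<^sup>2)"
  proof (rule set_integral_mono)
    show "set_integrable lborel {-1..1} (\<lambda>x. (d1 x)\<^sup>2)"
      using \<open>H01 psi d1\<close> by (rule H01_square_integrable)
    show "set_integrable lborel {-1..1::real} (\<lambda>x. c\<^sup>2)"
      by (intro continuous_on_Icc_set_integrable continuous_on_const)
    fix x :: real assume x: "x \<in> {-1..1}"
    obtain u v where "0 \<le> u" "0 \<le> v" "u + v = 1"
      and "(d1 x)\<^sup>2 = c\<^sup>2 * (1 - u^Suc n - v^Suc n)\<^sup>2"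
    proof (cases "x \<le> 0")
      case True
      then show ?thesis
        using x by (intro that[of "1 + x" "-x"]) (auto simp: d1_def power_mult_distrib simp del: power_Suc)
    next
      case False
      then show ?thesis
        using x by (intro that[of "1 - x" x]) (auto simp: d1_def power_mult_distrib simp del: power_Suc)
    qed
    then show "(d1 x)\<^sup>2 \<le> c\<^sup>2"
      using square_one_minus_powers_le_1 by (simp add: mult_left_le)
  qed
  moreover have "(LBINT x:{-1..1::real}. c\<^sup>2) = 2 * (real n + 2)\<^sup>2"
    by (simp add: c_def set_integral_const)
  ultimately show ?thesis by (auto simp: H02_def)
qed

lemma H02_exists_square_at_0_gt:
  assumes "0 \<le> \<theta>" "\<theta> < 1"
  shows "\<exists>psi d1 d2. H02 psi d1 d2 \<and> \<theta> * (LBINT x:{-1..1}. (d1 x)\<^sup>2) < 2 * (psi 0)\<^sup>2"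
proof -
  have "((\<lambda>n::nat. (n / (n + 2))\<^sup>2) \<longlongrightarrow> 1) sequentially" by real_asymp
  then have "eventually (\<lambda>n. \<theta> < (n / (n + 2))\<^sup>2) sequentially"
    using assms(2) by (rule order_tendstoD)
  then obtain n :: nat where n: "\<theta> < (n / (n + 2))\<^sup>2"
    by (auto simp: eventually_sequentially)
  obtain psi d1 d2 where "H02 psi d1 d2" "psi 0 = real n"
    and d1: "(LBINT x:{-1..1}. (d1 x)\<^sup>2) \<le> 2 * (real n + 2)\<^sup>2"
    using H02_smoothed_tent by blast
  have "\<theta> * (LBINT x:{-1..1}. (d1 x)\<^sup>2) \<le> \<theta> * (2 * (real n + 2)\<^sup>2)"
    using d1 assms(1) by (rule mult_left_mono)
  also have "\<dots> < 2 * (real n)\<^sup>2"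
    using n by (simp add: power_divide field_simps)
  finally show ?thesis using \<open>H02 psi d1 d2\<close> \<open>psi 0 = n\<close> by metis
qed

lemma Bc2_le_half:
  assumes "0 \<le> g * (rp - rm)"
  shows "Bc2 g rp rm \<le> g * (rp - rm) / 2"
  unfolding Bc2_def
proof (rule cSup_least)
  obtain psi d1 d2 where "H02 psi d1 d2" "0 < 2 * (psi 0)\<^sup>2"
    using H02_exists_square_at_0_gt[of 0] by auto
  then have "H01 psi d1 \<and> (\<exists>x\<in>{-1<..<1}. psi x \<noteq> 0)"
    by (auto simp: H02_def)
  then show "{g * (rp - rm) * (psi 0)\<^sup>2 / (LBINT x:{-1..1}. (d1 x)\<^sup>2) | psi d1.
      H01 psi d1 \<and> (\<exists>x\<in>{-1<..<1}. psi x \<noteq> 0)} \<noteq> {}"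
    by blast
next
  fix r assume "r \<in> {g * (rp - rm) * (psi 0)\<^sup>2 / (LBINT x:{-1..1}. (d1 x)\<^sup>2) | psi d1.
      H01 psi d1 \<and> (\<exists>x\<in>{-1<..<1}. psi x \<noteq> 0)}"
  then obtain psi d1 where r: "r = g * (rp - rm) * (psi 0)\<^sup>2 / (LBINT x:{-1..1}. (d1 x)\<^sup>2)"
    and "H01 psi d1" by blast
  have "g * (rp - rm) * (2 * (psi 0)\<^sup>2) \<le> g * (rp - rm) * (LBINT x:{-1..1}. (d1 x)\<^sup>2)"
    using H01_square_at_0_le[OF \<open>H01 psi d1\<close>] assms by (rule mult_left_mono)
  moreover have "0 \<le> (LBINT x:{-1..1}. (d1 x)\<^sup>2)"
    by (rule set_integral_nonneg) simp
  ultimately show "r \<le> g * (rp - rm) / 2"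
    unfolding r using assms by (cases "(LBINT x:{-1..1}. (d1 x)\<^sup>2) = 0") (auto simp: divide_simps)
qed

lemma ex1_eq_sqrt_neg:
  fixes f :: "real \<Rightarrow> real"
  assumes mono: "mono_on {0<..} f" and cont: "continuous_on {0<..} f"
    and lower: "\<And>s. 0 < s \<Longrightarrow> K \<le> f s"
    and upper: "\<And>s. 0 < s \<Longrightarrow> f s \<le> s * A + E" and "E < 0"
  shows "\<exists>!s. s \<in> {s. 0 < s \<and> f s < 0} \<and> s = sqrt (- f s)"
proof -
  define h where "h s = s\<^sup>2 + f s" for s
  have fixed_point_iff: "(f s < 0 \<and> s = sqrt (- f s)) \<longleftrightarrow> h s = 0" if "0 < s" for s
  proof
    assume "f s < 0 \<and> s = sqrt (- f s)"
    then have "s\<^sup>2 = - f s" by (metis less_le neg_0_less_iff_less real_sqrt_pow2)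
    then show "h s = 0" by (simp add: h_def)
  next
    assume "h s = 0"
    then have "f s = - s\<^sup>2" by (simp add: h_def algebra_simps)
    then show "f s < 0 \<and> s = sqrt (- f s)" using that by simp
  qed
  have h_strict: "h s < h t" if "0 < s" "s < t" for s t
    using mono_onD[OF mono, of s t] power_strict_mono[of s t 2] that by (simp add: h_def)
  have "((\<lambda>s. s\<^sup>2 + (s * A + E)) \<longlongrightarrow> E) (at_right 0)"
    by (auto intro!: tendsto_eq_intros)
  then have "eventually (\<lambda>s. s\<^sup>2 + (s * A + E) < 0) (at_right 0)"
    using \<open>E < 0\<close> by (rule order_tendstoD)
  moreover have "eventually (\<lambda>s. 0 < s) (at_right (0::real))"
    by (simp add: eventually_at_right_less)
  ultimately obtain s0 where s0: "0 < s0" "s0\<^sup>2 + (s0 * A + E) < 0"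
    using eventually_happens[OF eventually_conj] by force
  then have h0: "h s0 < 0" using upper[OF s0(1)] by (simp add: h_def)
  define s1 where "s1 = max s0 (\<bar>K\<bar> + 1)"
  have "1 \<le> s1" by (simp add: s1_def)
  then have "s1 * 1 \<le> s1\<^sup>2" unfolding power2_eq_square by (intro mult_left_mono) auto
  moreover have "\<bar>K\<bar> + 1 \<le> s1" "0 < s1" using s0(1) by (auto simp: s1_def)
  ultimately have h1: "0 < h s1" using lower[of s1] unfolding h_def by linarith
  have "continuous_on {s0..s1} h"
    unfolding h_def by (intro continuous_intros continuous_on_subset[OF cont]) (use s0 in auto)
  then obtain s where s: "s0 \<le> s" "s \<le> s1" "h s = 0"
    using IVT'[of h s0 0 s1] h0 h1 by (force simp: s1_def)
  show ?thesis
  proof (rule ex1I[of _ s])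
    show "s \<in> {s. 0 < s \<and> f s < 0} \<and> s = sqrt (- f s)"
      using fixed_point_iff[of s] s s0 by simp
  next
    fix t assume t: "t \<in> {s. 0 < s \<and> f s < 0} \<and> t = sqrt (- f t)"
    then have "h t = 0" using fixed_point_iff[of t] by simp
    then show "t = s"
      using h_strict[of t s] h_strict[of s t] t s s0 by (cases t s rule: linorder_cases) auto
  qed
qed

definition lower_envelope :: "'t set \<Rightarrow> ('t \<Rightarrow> real) \<Rightarrow> ('t \<Rightarrow> real) \<Rightarrow> real \<Rightarrow> real"
  where "lower_envelope M A E s = (INF T\<in>M. s * A T + E T)"

locale affine_family =
  fixes M :: "'t set" and A E :: "'t \<Rightarrow> real"
  assumes nonempty: "M \<noteq> {}"
    and slope_nonneg: "\<And>T. T \<in> M \<Longrightarrow> 0 \<le> A T"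
    and bdd_below_intercepts: "bdd_below (E ` M)"
begin

lemma intercept_le_affine:
  assumes "0 \<le> s" "T \<in> M"
  shows "(INF T\<in>M. E T) \<le> s * A T + E T"
proof -
  have "(INF T\<in>M. E T) \<le> E T"
    using bdd_below_intercepts assms(2) by (rule cINF_lower)
  also have "\<dots> \<le> s * A T + E T"
    using assms slope_nonneg by simp
  finally show ?thesis .
qed

lemma lower_envelope_le: "0 \<le> s \<Longrightarrow> T \<in> M \<Longrightarrow> lower_envelope M A E s \<le> s * A T + E T"
  unfolding lower_envelope_def
  by (rule cINF_lower) (auto intro: bdd_belowI2 intercept_le_affine)

lemma le_lower_envelope: "(\<And>T. T \<in> M \<Longrightarrow> y \<le> s * A T + E T) \<Longrightarrow> y \<le> lower_envelope M A E s"
  unfolding lower_envelope_def using nonempty by (rule cINF_greatest)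

lemma lower_envelope_bounded_below: "0 \<le> s \<Longrightarrow> (INF T\<in>M. E T) \<le> lower_envelope M A E s"
  by (rule le_lower_envelope) (rule intercept_le_affine)

lemma mono_on_lower_envelope: "mono_on {0..} (lower_envelope M A E)"
proof (rule mono_onI)
  fix s t :: real assume "s \<in> {0..}" "t \<in> {0..}" "s \<le> t"
  then show "lower_envelope M A E s \<le> lower_envelope M A E t"
    by (intro le_lower_envelope order_trans[OF lower_envelope_le])
      (auto intro!: mult_right_mono slope_nonneg)
qed

lemma concave_on_lower_envelope: "concave_on {0..} (lower_envelope M A E)"
  unfolding concave_on_def
proof (rule convex_onI)
  let ?l = "lower_envelope M A E"
  fix t x y :: real assume t: "0 < t" "t < 1" and xy: "x \<in> {0..}" "y \<in> {0..}"
  have "(1 - t) * ?l x + t * ?l y \<le> ?l ((1 - t) *\<^sub>R x + t *\<^sub>R y)"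
  proof (rule le_lower_envelope)
    fix T assume "T \<in> M"
    then have "(1 - t) * ?l x + t * ?l y \<le> (1 - t) * (x * A T + E T) + t * (y * A T + E T)"
      using t xy by (intro add_mono mult_left_mono lower_envelope_le) auto
    then show "(1 - t) * ?l x + t * ?l y \<le> ((1 - t) *\<^sub>R x + t *\<^sub>R y) * A T + E T"
      by (simp add: algebra_simps)
  qed
  then show "- ?l ((1 - t) *\<^sub>R x + t *\<^sub>R y) \<le> (1 - t) * - ?l x + t * - ?l y"
    by simp
qed simp

lemma continuous_on_lower_envelope: "continuous_on {0<..} (lower_envelope M A E)"
proof -
  have "convex_on {0<..} (\<lambda>s. - lower_envelope M A E s)"
    using concave_on_lower_envelope unfolding concave_on_def
    by (rule convex_on_subset) auto
  then have "continuous_on {0<..} (\<lambda>s. - (- lower_envelope M A E s))"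
    by (intro continuous_on_minus convex_on_continuous) auto
  then show ?thesis by simp
qed

theorem ex1_eq_sqrt_neg_lower_envelope:
  assumes "T \<in> M" "E T < 0"
  shows "\<exists>!s. s \<in> {s. 0 < s \<and> lower_envelope M A E s < 0} \<and> s = sqrt (- lower_envelope M A E s)"
proof (rule ex1_eq_sqrt_neg)
  show "mono_on {0<..} (lower_envelope M A E)"
    using mono_on_lower_envelope by (rule mono_on_subset) auto
  show "continuous_on {0<..} (lower_envelope M A E)" by (rule continuous_on_lower_envelope)
  show "\<And>s. 0 < s \<Longrightarrow> (INF T\<in>M. E T) \<le> lower_envelope M A E s"
    by (rule lower_envelope_bounded_below) simp
  show "\<And>s. 0 < s \<Longrightarrow> lower_envelope M A E s \<le> s * A T + E T"
    using assms(1) by (simp add: lower_envelope_le)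
qed (fact assms(2))

end

lemma exists_H02_E0_neg:
  assumes G: "0 < g * (rp - rm)" and b: "b\<^sup>2 < g * (rp - rm) / 2"
    and xi: "xivc2 g rp rm b < xi\<^sup>2"
  shows "\<exists>psi d1 d2. H02 psi d1 d2 \<and> E0 g rp rm b xi psi d1 d2 < 0"
proof -
  define D where "D psi d1 = g * (rp - rm) * (psi 0)\<^sup>2 - b\<^sup>2 * (LBINT x:{-1..1}. (d1 x)\<^sup>2)"
    for psi d1 :: "real \<Rightarrow> real"
  define R where "R = {b\<^sup>2 * (LBINT x:{-1..1}. (d2 x)\<^sup>2) / D psi d1 | psi d1 d2.
    H02 psi d1 d2 \<and> 0 < D psi d1}"
  obtain psi d1 d2 where "H02 psi d1 d2"
    and "2 * b\<^sup>2 / (g * (rp - rm)) * (LBINT x:{-1..1}. (d1 x)\<^sup>2) < 2 * (psi 0)\<^sup>2"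
    using H02_exists_square_at_0_gt[of "2 * b\<^sup>2 / (g * (rp - rm))"] G b by (auto simp: field_simps)
  then have "0 < D psi d1" using G by (simp add: D_def field_simps)
  then have "R \<noteq> {}" unfolding R_def using \<open>H02 psi d1 d2\<close> by blast
  moreover have "Inf R < xi\<^sup>2" using xi unfolding xivc2_def R_def D_def .
  ultimately obtain r where "r \<in> R" "r < xi\<^sup>2" using cInf_lessD by blast
  then obtain psi d1 d2 where "H02 psi d1 d2" "0 < D psi d1"
    and "b\<^sup>2 * (LBINT x:{-1..1}. (d2 x)\<^sup>2) / D psi d1 < xi\<^sup>2"
    unfolding R_def by blast
  then have "b\<^sup>2 * (LBINT x:{-1..1}. (d2 x)\<^sup>2) < xi\<^sup>2 * D psi d1"
    by (simp add: pos_divide_less_eq)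
  then have "E0 g rp rm b xi psi d1 d2 < 0"
    \<comment> \<open>\<open>2 E0 = b\<^sup>2 \<integral>\<psi>''\<^sup>2 - \<xi>\<^sup>2 D\<close>\<close>
    unfolding E0_def D_def by (simp add: algebra_simps)
  with \<open>H02 psi d1 d2\<close> show ?thesis by blast
qed

definition admissible :: "real \<Rightarrow> real \<Rightarrow> real \<Rightarrow> ((real \<Rightarrow> real) \<times> (real \<Rightarrow> real) \<times> (real \<Rightarrow> real)) set"
  where "admissible rp rm xi = {(psi, d1, d2). H02 psi d1 d2 \<and> Jf rp rm xi psi d1 = 1}"

lemma exists_admissible_E0_neg:
  assumes "H02 psi d1 d2" "E0 g rp rm b xi psi d1 d2 < 0" "0 < rm" "rm \<le> rp"
  shows "\<exists>T \<in> admissible rp rm xi. (\<lambda>(psi, d1, d2). E0 g rp rm b xi psi d1 d2) T < 0"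
proof -
  have "psi 0 \<noteq> 0"
  proof
    assume "psi 0 = 0"
    then have "0 \<le> E0 g rp rm b xi psi d1 d2"
      unfolding E0_def by (auto intro!: mult_nonneg_nonneg add_nonneg_nonneg set_integral_nonneg)
    with assms(2) show False by simp
  qed
  then have J: "0 < Jf rp rm xi psi d1"
    using assms(1,3,4) by (intro Jf_pos) (auto simp: H02_def)
  define c where "c = 1 / sqrt (Jf rp rm xi psi d1)"
  have "c\<^sup>2 * Jf rp rm xi psi d1 = 1" using J by (simp add: c_def power_divide)
  moreover have "0 < c\<^sup>2" using J by (simp add: c_def)
  ultimately show ?thesis
    using H02_scale[OF assms(1), of c] assms(2)
    by (intro bexI[of _ "(\<lambda>x. c * psi x, \<lambda>x. c * d1 x, \<lambda>x. c * d2 x)"])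
      (simp_all add: admissible_def Jf_scale E0_scale mult_pos_neg)
qed

lemma alpha_eq_lower_envelope:
  "alpha g rp rm mp mm b xi = lower_envelope (admissible rp rm xi)
    (\<lambda>(psi, d1, d2). dissipation mp mm xi psi d1 d2) (\<lambda>(psi, d1, d2). E0 g rp rm b xi psi d1 d2)"
proof
  fix s
  have "{Es g rp rm mp mm b xi s psi d1 d2 | psi d1 d2. H02 psi d1 d2 \<and> Jf rp rm xi psi d1 = 1}
    = {s * dissipation mp mm xi psi d1 d2 + E0 g rp rm b xi psi d1 d2 | psi d1 d2.
        H02 psi d1 d2 \<and> Jf rp rm xi psi d1 = 1}"
    by (metis (lifting) Es_eq_affine)
  also have "\<dots> = (\<lambda>(psi, d1, d2). s * dissipation mp mm xi psi d1 d2 + E0 g rp rm b xi psi d1 d2)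
      ` admissible rp rm xi"
    unfolding admissible_def by force
  finally show "alpha g rp rm mp mm b xi s = lower_envelope (admissible rp rm xi)
    (\<lambda>(psi, d1, d2). dissipation mp mm xi psi d1 d2) (\<lambda>(psi, d1, d2). E0 g rp rm b xi psi d1 d2) s"
    unfolding alpha_def lower_envelope_def by (simp add: case_prod_beta)
qed

lemma affine_family_energies:
  assumes "admissible rp rm xi \<noteq> {}" "0 \<le> g" "0 < rm" "rm \<le> rp" "0 \<le> mp" "0 \<le> mm"
  shows "affine_family (admissible rp rm xi)
    (\<lambda>(psi, d1, d2). dissipation mp mm xi psi d1 d2) (\<lambda>(psi, d1, d2). E0 g rp rm b xi psi d1 d2)"
proof
  show "admissible rp rm xi \<noteq> {}" by fact
  show "\<And>T. T \<in> admissible rp rm xi \<Longrightarrow> 0 \<le> (\<lambda>(psi, d1, d2). dissipation mp mm xi psi d1 d2) T"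
    using assms(5,6) by (auto intro: dissipation_nonneg)
  show "bdd_below ((\<lambda>(psi, d1, d2). E0 g rp rm b xi psi d1 d2) ` admissible rp rm xi)"
  proof (rule bdd_belowI2)
    fix T assume "T \<in> admissible rp rm xi"
    then obtain psi d1 d2 where "T = (psi, d1, d2)" "H01 psi d1" "Jf rp rm xi psi d1 = 1"
      by (auto simp: admissible_def H02_def)
    then show "- (xi\<^sup>2 * g * (rp - rm) / (2 * rm)) \<le> (\<lambda>(psi, d1, d2). E0 g rp rm b xi psi d1 d2) T"
      using E0_lower_bound[of psi d1 g rm rp xi b d2] assms(2-4) by simp
  qed
qed

theorem lemma3p7:
  fixes g rp rm mp mm xi :: real and B :: "'a::real_normed_vector"
  assumes "g > 0" and "rm > 0" and "rp > rm" and "mp > 0" and "mm > 0" and "B \<noteq> 0"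
    and "norm B < sqrt (Bc2 g rp rm)"
    and "\<bar>xi\<bar> > sqrt (xivc2 g rp rm (norm B))"
  shows "\<exists>!s. s \<in> {s. s > 0 \<and> alpha g rp rm mp mm (norm B) xi s < 0}
              \<and> s = sqrt (- alpha g rp rm mp mm (norm B) xi s)"
proof -
  define b where "b = norm B"
  have G: "0 < g * (rp - rm)" using assms(1,3) by simp
  have "sqrt (b\<^sup>2) < sqrt (Bc2 g rp rm)" using assms(7) by (simp add: b_def)
  then have "b\<^sup>2 < g * (rp - rm) / 2"
    using Bc2_le_half[of g rp rm] G by (simp only: real_sqrt_less_iff) linarith
  moreover have "sqrt (xivc2 g rp rm b) < sqrt (xi\<^sup>2)" using assms(8) by (simp add: b_def)
  then have "xivc2 g rp rm b < xi\<^sup>2" by (simp only: real_sqrt_less_iff)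
  ultimately obtain psi d1 d2 where "H02 psi d1 d2" "E0 g rp rm b xi psi d1 d2 < 0"
    using exists_H02_E0_neg[OF G] by blast
  then obtain T where T: "T \<in> admissible rp rm xi" "(\<lambda>(psi, d1, d2). E0 g rp rm b xi psi d1 d2) T < 0"
    using exists_admissible_E0_neg assms(2,3) by (metis less_imp_le)
  interpret affine_family "admissible rp rm xi"
    "\<lambda>(psi, d1, d2). dissipation mp mm xi psi d1 d2" "\<lambda>(psi, d1, d2). E0 g rp rm b xi psi d1 d2"
    using T(1) assms(1-5) by (intro affine_family_energies) auto
  show ?thesis
    using ex1_eq_sqrt_neg_lower_envelope[OF T] by (simp add: alpha_eq_lower_envelope b_def)
qed

end
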